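(* Let $d \ge 2$ and $n \ge 1$ be integers and $\sigma > 0$. Let $W \in \mathbb{R}^{d \times n}$ have independent entries $w_{ki} \sim N(0,\sigma^2)$. Define the $n \times n$ diagonal matrix $T = \operatorname{diag}\bigl(\sum_{j=1}^{n} |(W^T W)_{ij}|\bigr)_{i=1}^n$ and $\bar W = W T^{-1/2}$. Then for every column index $i$ and row index $k$, the random variable $\frac{w_{ki}^2}{\sum_{m=1}^{d} w_{mi}^2}$ follows the Beta distribution $\mathrm{B}\bigl(\tfrac12, \tfrac{d-1}{2}\bigr)$, its expectation equals $\frac{1}{d}$, and consequently $\mathbb{E}\bigl[\bar W_{ki}^2\bigr] \le \frac{1}{d}$; in particular this bound does not depend on $\sigma$.
   Context: $|(W^TW)_{ij}|$ denotes the absolute value of the $(i,j)$ entry of $W^TW$. The matrix $W T^{-1/2}$ is the weight parametrization used in Almost-Orthogonal Layers / SDP-based Lipschitz Layers (with all scaling parameters $q_i = 1$). $\mathrm{B}(a,b)$ denotes the Beta distribution with parameters $a,b>0$. *)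

theory Defs
  imports "HOL-Probability.Probability"
begin

definition beta_density :: "real \<Rightarrow> real \<Rightarrow> real \<Rightarrow> real" where
  "beta_density a b x =
     (if 0 < x \<and> x < 1 then x powr (a - 1) * (1 - x) powr (b - 1) / Beta a b else 0)"

end

theory Submission
  imports Defs
begin

(* Each w_{mi}^2 has the Gamma(1/2, 1/(2 sigma^2)) density, and Gamma densities with a common rate
   convolve by adding shapes, so the squares of the other d - 1 entries of column i sum to a
   Gamma((d-1)/2, 1/(2 sigma^2)) variable independent of w_{ki}^2.  For independent Gamma(a, c) and
   Gamma(b, c) variables U, V the ratio U / (U + V) is Beta(a, b), whose mean a / (a + b) is 1/d here;
   the rate, and hence sigma, cancels.  Finally T_i contains the diagonal term |(W^T W)_{ii}| =
   sum_m w_{mi}^2, so Wbar_{ki}^2 <= w_{ki}^2 / sum_m w_{mi}^2 pointwise. *)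

section \<open>Gamma and Beta integrals\<close>

definition gamma_density :: "real \<Rightarrow> real \<Rightarrow> real \<Rightarrow> real" where
  "gamma_density a c x = (if 0 < x then c powr a * x powr (a - 1) * exp (- (c * x)) / Gamma a else 0)"

lemma gamma_density_nonneg: "0 < a \<Longrightarrow> 0 < c \<Longrightarrow> 0 \<le> gamma_density a c x"
  by (simp add: gamma_density_def)

lemma borel_measurable_gamma_density[measurable]: "gamma_density a c \<in> borel_measurable borel"
  unfolding gamma_density_def by measurable

lemma Beta_real_pos: "0 < (a::real) \<Longrightarrow> 0 < b \<Longrightarrow> 0 < Beta a b"
  using Gamma_real_pos[of a] Gamma_real_pos[of b] Gamma_real_pos[of "a + b"] by (simp add: Beta_def)

lemma beta_density_nonneg: "0 < a \<Longrightarrow> 0 < b \<Longrightarrow> 0 \<le> beta_density a b x"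
  using Beta_real_pos[of a b] by (simp add: beta_density_def)

lemma borel_measurable_beta_density[measurable]: "beta_density a b \<in> borel_measurable borel"
  unfolding beta_density_def by measurable

lemma nn_integral_Beta_real:
  assumes "0 < a" "0 < b"
  shows "(\<integral>\<^sup>+t. ennreal (t powr (a - 1) * (1 - t) powr (b - 1)) * indicator {0..1} t \<partial>lborel)
    = ennreal (Beta a b)"
  by (rule nn_integral_has_integral_lebesgue'[OF _ has_integral_Beta_real[OF assms]]) auto

lemma nn_integral_Beta_scaled:
  fixes a b z :: real
  assumes a: "0 < a" and b: "0 < b" and z: "0 < z"
  shows "(\<integral>\<^sup>+y. ennreal ((z - y) powr (a - 1) * y powr (b - 1)) * indicator {0..z} y \<partial>lborel)
    = ennreal (z powr (a + b - 1) * Beta a b)"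
proof -
  have scale: "ennreal ((z - (0 + z * t)) powr (a - 1) * (0 + z * t) powr (b - 1)) * indicator {0..z} (0 + z * t)
      = ennreal (z powr (a + b - 2)) * (ennreal (t powr (b - 1) * (1 - t) powr (a - 1)) * indicator {0..1} t)" for t
  proof (cases "0 \<le> t \<and> t \<le> 1")
    case True
    have "z - z * t = z * (1 - t)" by (simp add: algebra_simps)
    then have "(z - z * t) powr (a - 1) * (z * t) powr (b - 1)
        = (z powr (a - 1) * z powr (b - 1)) * (t powr (b - 1) * (1 - t) powr (a - 1))"
      using True z by (simp add: powr_mult mult_ac)
    also have "z powr (a - 1) * z powr (b - 1) = z powr (a + b - 2)"
      by (simp add: powr_add[symmetric])
    finally show ?thesis
      using True z by (simp add: mult_le_cancel_left1 ennreal_mult''[symmetric])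
  next
    case False
    then have "0 + z * t \<notin> {0..z}"
      using z by (auto simp: zero_le_mult_iff mult_le_cancel_left1)
    with False show ?thesis by simp
  qed
  have "(\<integral>\<^sup>+y. ennreal ((z - y) powr (a - 1) * y powr (b - 1)) * indicator {0..z} y \<partial>lborel)
      = ennreal \<bar>z\<bar> * (\<integral>\<^sup>+t. ennreal ((z - (0 + z * t)) powr (a - 1) * (0 + z * t) powr (b - 1))
          * indicator {0..z} (0 + z * t) \<partial>lborel)"
    by (rule nn_integral_real_affine) (use z in auto)
  also have "\<dots> = ennreal z * (ennreal (z powr (a + b - 2)) * ennreal (Beta b a))"
    unfolding scale using z by (simp add: nn_integral_cmult nn_integral_Beta_real a b)
  also have "\<dots> = ennreal (z powr (a + b - 1) * Beta a b)"
  proof -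
    have "z * z powr (a + b - 2) = z powr (a + b - 1)"
      using z by (simp add: powr_mult_base)
    then show ?thesis
      using z a b by (simp add: Beta_commute ennreal_mult''[symmetric] Beta_real_pos less_imp_le mult.assoc)
  qed
  finally show ?thesis .
qed

lemma nn_integral_powr_times_exp_Ici:
  assumes a: "0 < a" and l: "0 < l"
  shows "(\<integral>\<^sup>+x. ennreal (x powr (a - 1) * exp (- (l * x))) * indicator {0..} x \<partial>lborel)
    = ennreal (Gamma a / l powr a)"
proof -
  have scale: "ennreal ((0 + 1/l * x) powr (a - 1) * exp (- (l * (0 + 1/l * x)))) * indicator {0..} (0 + 1/l * x)
      = ennreal (l powr (1 - a)) * (ennreal (x powr (a - 1) / exp x) * indicator {0..} x)" for x
  proof (cases "x \<ge> 0")
    case True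
    have "(x / l) powr (a - 1) = l powr (1 - a) * x powr (a - 1)"
      using True l by (simp add: powr_divide powr_diff)
    then show ?thesis
      using True l by (simp add: exp_minus ennreal_mult''[symmetric] field_simps)
  qed (use l in \<open>simp add: indicator_def zero_le_divide_iff\<close>)
  have "(\<integral>\<^sup>+x. ennreal (x powr (a - 1) * exp (- (l * x))) * indicator {0..} x \<partial>lborel)
      = ennreal \<bar>1/l\<bar> * (\<integral>\<^sup>+x. ennreal ((0 + 1/l * x) powr (a - 1) * exp (- (l * (0 + 1/l * x))))
          * indicator {0..} (0 + 1/l * x) \<partial>lborel)"
    by (rule nn_integral_real_affine) (use l in auto)
  also have "\<dots> = ennreal (1/l) * (ennreal (l powr (1 - a))
      * (\<integral>\<^sup>+x. ennreal (x powr (a - 1) / exp x) * indicator {0..} x \<partial>lborel))"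
    unfolding scale using l by (subst nn_integral_cmult) auto
  also have "(\<integral>\<^sup>+x. ennreal (x powr (a - 1) / exp x) * indicator {0..} x \<partial>lborel) = ennreal (Gamma a)"
    by (rule nn_integral_has_integral_lebesgue'[OF _ Gamma_integral_real[OF a]]) auto
  also have "ennreal (1/l) * (ennreal (l powr (1 - a)) * ennreal (Gamma a)) = ennreal (Gamma a / l powr a)"
    using l a by (simp add: ennreal_mult''[symmetric] powr_diff field_simps)
  finally show ?thesis .
qed

section \<open>Changes of variables on the half-line\<close>

lemma nn_integral_substitution_incseq:
  fixes f :: "real \<Rightarrow> ennreal" and g g' :: "real \<Rightarrow> real" and bs :: "nat \<Rightarrow> real"
  assumes [measurable]: "f \<in> borel_measurable borel" "g \<in> borel_measurable borel" "g' \<in> borel_measurable borel"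
    and deriv: "\<And>x n. x \<in> {a..bs n} \<Longrightarrow> (g has_real_derivative g' x) (at x)"
    and cont: "\<And>n. continuous_on {a..bs n} g'"
    and nonneg: "\<And>x n. x \<in> {a..bs n} \<Longrightarrow> 0 \<le> g' x"
    and less: "\<And>n. a < bs n" and mono: "incseq bs" "incseq (\<lambda>n. g (bs n))"
  shows "(\<integral>\<^sup>+y. f y * indicator (\<Union>n. {g a..g (bs n)}) y \<partial>lborel)
       = (\<integral>\<^sup>+x. f (g x) * ennreal (g' x) * indicator (\<Union>n. {a..bs n}) x \<partial>lborel)"
proof -
  have inc: "incseq (\<lambda>n. {g a..g (bs n)})" "incseq (\<lambda>n. {a..bs n})"
    using mono by (auto simp: incseq_def)
  have "(\<integral>\<^sup>+y. f y * indicator (\<Union>n. {g a..g (bs n)}) y \<partial>lborel)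
      = emeasure (density lborel f) (\<Union>n. {g a..g (bs n)})"
    by (simp add: emeasure_density)
  also have "\<dots> = (SUP n. emeasure (density lborel f) {g a..g (bs n)})"
    by (rule SUP_emeasure_incseq[symmetric]) (use inc in auto)
  also have "\<dots> = (SUP n. emeasure (density lborel (\<lambda>x. f (g x) * ennreal (g' x))) {a..bs n})"
  proof (intro SUP_cong refl)
    fix n
    show "emeasure (density lborel f) {g a..g (bs n)}
      = emeasure (density lborel (\<lambda>x. f (g x) * ennreal (g' x))) {a..bs n}"
      using nn_integral_substitution_aux[OF _ _ deriv[where n = n] cont[of n] nonneg[where n = n] less[of n]]
      by (simp add: emeasure_density)
  qed
  also have "\<dots> = emeasure (density lborel (\<lambda>x. f (g x) * ennreal (g' x))) (\<Union>n. {a..bs n})"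
    by (rule SUP_emeasure_incseq) (use inc in auto)
  also have "\<dots> = (\<integral>\<^sup>+x. f (g x) * ennreal (g' x) * indicator (\<Union>n. {a..bs n}) x \<partial>lborel)"
    by (simp add: emeasure_density)
  finally show ?thesis .
qed

lemma UN_atLeastAtMost_real_of_nat_Suc: "(\<Union>n::nat. {0..real n + 1}) = {0::real..}"
proof safe
  fix y :: real assume "0 \<le> y"
  obtain n :: nat where "y \<le> real n + 1"
    by (intro that[of "nat \<lceil>y\<rceil>"]) linarith
  with \<open>0 \<le> y\<close> show "y \<in> (\<Union>n. {0..real n + 1})" by auto
qed auto

lemma nn_integral_square_substitution:
  fixes G :: "real \<Rightarrow> ennreal"
  assumes [measurable]: "G \<in> borel_measurable borel"
  shows "(\<integral>\<^sup>+y. G y * indicator {0..} y \<partial>lborel)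
    = (\<integral>\<^sup>+x. G (x\<^sup>2) * ennreal (2 * x) * indicator {0..} x \<partial>lborel)"
proof -
  have range_sq: "(\<Union>n::nat. {0\<^sup>2..(real n + 1)\<^sup>2}) = {0::real..}"
  proof
    have "{0..real n + 1} \<subseteq> {0\<^sup>2..(real n + 1)\<^sup>2}" for n :: nat
      using self_le_power[of "real n + 1" 2] by auto
    then show "{0..} \<subseteq> (\<Union>n::nat. {0\<^sup>2..(real n + 1)\<^sup>2})"
      unfolding UN_atLeastAtMost_real_of_nat_Suc[symmetric] by blast
  qed (auto simp: zero_le_power2)
  have "(\<integral>\<^sup>+y. G y * indicator {0..} y \<partial>lborel)
      = (\<integral>\<^sup>+y. G y * indicator (\<Union>n::nat. {0\<^sup>2..(real n + 1)\<^sup>2}) y \<partial>lborel)"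
    by (simp only: range_sq)
  also have "\<dots> = (\<integral>\<^sup>+x. G (x\<^sup>2) * ennreal (2 * x) * indicator (\<Union>n::nat. {0..real n + 1}) x \<partial>lborel)"
  proof (rule nn_integral_substitution_incseq[of G "\<lambda>x. x\<^sup>2" "\<lambda>x. 2 * x" 0 "\<lambda>n. real n + 1"])
    show "((\<lambda>x. x\<^sup>2) has_real_derivative 2 * x) (at x)" for x :: real
      by (auto intro!: derivative_eq_intros)
    show "incseq (\<lambda>n. real n + 1)" "incseq (\<lambda>n. (real n + 1)\<^sup>2)"
      by (auto simp: incseq_def intro!: power_mono)
    show "continuous_on {0..real n + 1} (\<lambda>x. 2 * x)" for n
      by (intro continuous_intros)
    show "(\<lambda>x::real. x\<^sup>2) \<in> borel_measurable borel"
      by measurable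
    show "(\<lambda>x::real. 2 * x) \<in> borel_measurable borel"
      by measurable
    show "0 \<le> 2 * x" if "x \<in> {0..real n + 1}" for x :: real and n :: nat
      using that by simp
    show "0 < real n + 1" for n :: nat
      by simp
  qed (rule assms)
  finally show ?thesis
    unfolding UN_atLeastAtMost_real_of_nat_Suc .
qed

lemma UN_atLeastAtMost_one_minus_inverse: "(\<Union>n::nat. {0..1 - 1 / (real n + 2)}) = {0::real..<1}"
proof
  show "{0..<1} \<subseteq> (\<Union>n::nat. {0..1 - 1 / (real n + 2)})"
  proof
    fix r :: real assume r: "r \<in> {0..<1}"
    obtain n :: nat where n: "1 / (1 - r) \<le> real n"
      by (intro that[of "nat \<lceil>1 / (1 - r)\<rceil>"]) linarith
    have "1 / (real n + 2) \<le> 1 / (1 / (1 - r))"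
      using n r by (intro divide_left_mono) (auto simp: field_simps)
    with r have "r \<in> {0..1 - 1 / (real n + 2)}"
      by simp
    then show "r \<in> (\<Union>n::nat. {0..1 - 1 / (real n + 2)})"
      by blast
  qed
  show "(\<Union>n::nat. {0..1 - 1 / (real n + 2)}) \<subseteq> {0::real..<1}"
  proof (intro UN_least subsetI)
    fix n :: nat and r :: real assume r: "r \<in> {0..1 - 1 / (real n + 2)}"
    have "1 - 1 / (real n + 2) < 1" by simp
    with r show "r \<in> {0..<1}"
      by (meson atLeastAtMost_iff atLeastLessThan_iff le_less_trans)
  qed
qed

lemma nn_integral_odds_substitution:
  fixes G :: "real \<Rightarrow> ennreal"
  assumes [measurable]: "G \<in> borel_measurable borel"
  shows "(\<integral>\<^sup>+s. G s * indicator {0..} s \<partial>lborel)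
    = (\<integral>\<^sup>+r. G (r / (1 - r)) * ennreal (1 / (1 - r)\<^sup>2) * indicator {0..<1} r \<partial>lborel)"
proof -
  define bs where "bs n = 1 - 1 / (real n + 2)" for n :: nat
  have bs: "0 < bs n" "bs n < 1" for n
    unfolding bs_def by (auto simp: field_simps)
  have odds_bs: "bs n / (1 - bs n) = real n + 1" for n
    unfolding bs_def by (simp add: field_simps)
  have "(\<Union>n. {0..bs n}) = {0..<1}"
    unfolding bs_def by (rule UN_atLeastAtMost_one_minus_inverse)
  then have "(\<integral>\<^sup>+r. G (r / (1 - r)) * ennreal (1 / (1 - r)\<^sup>2) * indicator {0..<1} r \<partial>lborel)
      = (\<integral>\<^sup>+r. G (r / (1 - r)) * ennreal (1 / (1 - r)\<^sup>2) * indicator (\<Union>n. {0..bs n}) r \<partial>lborel)"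
    by (simp only:)
  also have "\<dots> = (\<integral>\<^sup>+s. G s * indicator (\<Union>n. {0 / (1 - 0)..bs n / (1 - bs n)}) s \<partial>lborel)"
  proof (rule nn_integral_substitution_incseq[symmetric, of G "\<lambda>r. r / (1 - r)" "\<lambda>r. 1 / (1 - r)\<^sup>2" 0 bs])
    fix r n assume "r \<in> {0..bs n}"
    then have "r < 1" using bs(2)[of n] by auto
    then show "((\<lambda>r. r / (1 - r)) has_real_derivative 1 / (1 - r)\<^sup>2) (at r)"
      by (auto intro!: derivative_eq_intros simp: field_simps power2_eq_square)
    show "0 \<le> 1 / (1 - r)\<^sup>2" by simp
  next
    fix n
    show "continuous_on {0..bs n} (\<lambda>r. 1 / (1 - r)\<^sup>2)"
      using bs(2)[of n] by (intro continuous_intros) auto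
    show "0 < bs n" by (rule bs)
  next
    show "incseq bs" unfolding bs_def incseq_def by (auto simp: field_simps)
    show "incseq (\<lambda>n. bs n / (1 - bs n))" unfolding odds_bs incseq_def by auto
    show "(\<lambda>r::real. r / (1 - r)) \<in> borel_measurable borel"
      by measurable
    show "(\<lambda>r::real. 1 / (1 - r)\<^sup>2) \<in> borel_measurable borel"
      by measurable
  qed (rule assms)
  also have "\<dots> = (\<integral>\<^sup>+s. G s * indicator {0..} s \<partial>lborel)"
    by (simp only: odds_bs UN_atLeastAtMost_real_of_nat_Suc div_0)
  finally show ?thesis ..
qed

lemma nn_integral_even:
  fixes F :: "real \<Rightarrow> ennreal"
  assumes [measurable]: "F \<in> borel_measurable borel" and even: "\<And>x. F (- x) = F x"
  shows "(\<integral>\<^sup>+x. F x \<partial>lborel) = 2 * (\<integral>\<^sup>+x. F x * indicator {0..} x \<partial>lborel)"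
proof -
  have "(\<integral>\<^sup>+x. F x * indicator {..<0} x \<partial>lborel) = (\<integral>\<^sup>+x. F x * indicator {0<..} x \<partial>lborel)"
    using nn_integral_real_affine[of "\<lambda>x. F x * indicator {..<0} x" "-1" 0]
    by (simp add: even indicator_def)
  also have "\<dots> = (\<integral>\<^sup>+x. F x * indicator {0..} x \<partial>lborel)"
    by (intro nn_integral_cong_AE)
      (use AE_lborel_singleton[of 0] in \<open>auto elim!: eventually_mono simp: indicator_def\<close>)
  finally have neg: "(\<integral>\<^sup>+x. F x * indicator {..<0} x \<partial>lborel) = (\<integral>\<^sup>+x. F x * indicator {0..} x \<partial>lborel)" .
  have "(\<integral>\<^sup>+x. F x \<partial>lborel) = (\<integral>\<^sup>+x. F x * indicator {0..} x + F x * indicator {..<0} x \<partial>lborel)"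
    by (intro nn_integral_cong) (auto simp: indicator_def)
  also have "\<dots> = (\<integral>\<^sup>+x. F x * indicator {0..} x \<partial>lborel) + (\<integral>\<^sup>+x. F x * indicator {..<0} x \<partial>lborel)"
    by (rule nn_integral_add) auto
  finally show ?thesis
    by (simp add: neg mult_2)
qed

lemma nn_integral_ratio_rescale:
  fixes f :: "real \<Rightarrow> ennreal"
  assumes [measurable]: "f \<in> borel_measurable borel" "A \<in> sets borel" and v: "0 < v"
  shows "(\<integral>\<^sup>+u. f u * indicator A (u / (u + v)) \<partial>lborel)
    = (\<integral>\<^sup>+s. ennreal v * (f (v * s) * indicator A (s / (s + 1))) \<partial>lborel)"
proof -
  have scale: "v * s / (v * s + v) = s / (s + 1)" for s
    using v by (metis distrib_left mult.commute mult.right_neutral mult_divide_mult_cancel_left_if less_irrefl)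
  have "(\<integral>\<^sup>+u. f u * indicator A (u / (u + v)) \<partial>lborel)
      = ennreal \<bar>v\<bar> * (\<integral>\<^sup>+s. f (0 + v * s) * indicator A ((0 + v * s) / ((0 + v * s) + v)) \<partial>lborel)"
    by (rule nn_integral_real_affine) (use v in auto)
  also have "\<dots> = (\<integral>\<^sup>+s. ennreal v * (f (v * s) * indicator A (s / (s + 1))) \<partial>lborel)"
    using v by (subst nn_integral_cmult) (auto simp: scale)
  finally show ?thesis .
qed

section \<open>Squares of centred Gaussians\<close>

lemma distributed_lborelI:
  fixes X :: "'a \<Rightarrow> real" and f :: "real \<Rightarrow> ennreal"
  assumes [measurable]: "X \<in> borel_measurable M" "f \<in> borel_measurable borel"
    and emeasure: "\<And>A. A \<in> sets borel \<Longrightarrow>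
      emeasure M (X -` A \<inter> space M) = (\<integral>\<^sup>+x. f x * indicator A x \<partial>lborel)"
  shows "distributed M lborel X f"
  unfolding distributed_def
proof (intro conjI)
  show "distr M lborel X = density lborel f"
    by (rule measure_eqI) (simp_all add: emeasure_distr emeasure_density emeasure)
qed simp_all

lemma gamma_density_half_square:
  fixes \<sigma> x :: real
  assumes s: "0 < \<sigma>" and x: "0 < x"
  shows "gamma_density (1/2) (1 / (2 * \<sigma>\<^sup>2)) (x\<^sup>2) * (2 * x) = 2 * normal_density 0 \<sigma> x"
proof -
  have p1: "(x\<^sup>2) powr (- (1/2)) = 1 / x"
    using x by (simp add: powr_minus_divide powr_half_sqrt)
  have p2: "(1 / (2 * \<sigma>\<^sup>2)) powr (1/2) = 1 / (sqrt 2 * \<sigma>)"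
    using s by (simp add: powr_half_sqrt real_sqrt_divide real_sqrt_mult)
  have p3: "sqrt (pi * (2 * \<sigma>\<^sup>2)) = sqrt 2 * sqrt pi * \<sigma>"
    using s by (simp add: real_sqrt_mult)
  show ?thesis
    using x s unfolding gamma_density_def normal_density_def
    by (simp add: p1 p2 p3 Gamma_one_half_real field_simps)
qed

lemma distributed_square_normal:
  fixes X :: "'a \<Rightarrow> real"
  assumes s: "0 < \<sigma>" and X: "distributed M lborel X (\<lambda>x. ennreal (normal_density 0 \<sigma> x))"
  shows "distributed M lborel (\<lambda>\<omega>. (X \<omega>)\<^sup>2) (\<lambda>y. ennreal (gamma_density (1/2) (1 / (2 * \<sigma>\<^sup>2)) y))"
proof (rule distributed_lborelI)
  have [measurable]: "X \<in> borel_measurable M"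
    using distributed_measurable[OF X] by simp
  show "(\<lambda>\<omega>. (X \<omega>)\<^sup>2) \<in> borel_measurable M"
    by measurable
  fix A :: "real set" assume [measurable]: "A \<in> sets borel"
  define \<gamma> where "\<gamma> = gamma_density (1/2) (1 / (2 * \<sigma>\<^sup>2))"
  have "emeasure M ((\<lambda>\<omega>. (X \<omega>)\<^sup>2) -` A \<inter> space M) = emeasure M (X -` {x. x\<^sup>2 \<in> A} \<inter> space M)"
    by (intro arg_cong[where f = "emeasure M"]) auto
  also have "\<dots> = (\<integral>\<^sup>+x. ennreal (normal_density 0 \<sigma> x) * indicator A (x\<^sup>2) \<partial>lborel)"
    using distributed_emeasure[OF X, of "{x. x\<^sup>2 \<in> A}"] by (simp add: indicator_def)
  also have "\<dots> = 2 * (\<integral>\<^sup>+x. ennreal (normal_density 0 \<sigma> x) * indicator A (x\<^sup>2) * indicator {0..} x \<partial>lborel)"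
    by (rule nn_integral_even) (simp_all add: normal_density_def)
  also have "\<dots> = (\<integral>\<^sup>+x. ennreal (\<gamma> (x\<^sup>2)) * indicator A (x\<^sup>2) * ennreal (2 * x) * indicator {0..} x \<partial>lborel)"
  proof -
    have "ennreal 2 * (ennreal (normal_density 0 \<sigma> x) * indicator A (x\<^sup>2) * indicator {0..} x)
        = ennreal (\<gamma> (x\<^sup>2)) * indicator A (x\<^sup>2) * ennreal (2 * x) * indicator {0..} x" if "x \<noteq> 0" for x
    proof (cases "0 < x")
      case True
      have "ennreal (\<gamma> (x\<^sup>2)) * ennreal (2 * x) = ennreal (\<gamma> (x\<^sup>2) * (2 * x))"
        using True by (simp add: ennreal_mult'')
      also have "\<dots> = ennreal 2 * ennreal (normal_density 0 \<sigma> x)"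
        unfolding \<gamma>_def gamma_density_half_square[OF s True] by (simp add: ennreal_mult)
      finally have "ennreal (\<gamma> (x\<^sup>2)) * ennreal (2 * x) = ennreal 2 * ennreal (normal_density 0 \<sigma> x)" .
      then show ?thesis
        by (metis mult.assoc mult.commute)
    qed (use that in \<open>simp add: indicator_def\<close>)
    then show ?thesis
      by (subst nn_integral_cmult[symmetric]) (auto intro!: nn_integral_cong_AE
          AE_mp[OF AE_lborel_singleton[of 0] AE_I2])
  qed
  also have "\<dots> = (\<integral>\<^sup>+y. ennreal (\<gamma> y) * indicator A y * indicator {0..} y \<partial>lborel)"
    by (rule nn_integral_square_substitution[symmetric]) (simp add: \<gamma>_def)
  also have "\<dots> = (\<integral>\<^sup>+y. ennreal (\<gamma> y) * indicator A y \<partial>lborel)"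
    by (intro nn_integral_cong) (simp add: \<gamma>_def gamma_density_def indicator_def)
  finally show "emeasure M ((\<lambda>\<omega>. (X \<omega>)\<^sup>2) -` A \<inter> space M) = (\<integral>\<^sup>+y. ennreal (\<gamma> y) * indicator A y \<partial>lborel)" .
qed simp

lemma convolution_gamma_density:
  fixes a b c z :: real
  assumes a: "0 < a" and b: "0 < b" and c: "0 < c"
  shows "(\<integral>\<^sup>+y. ennreal (gamma_density a c (z - y)) * ennreal (gamma_density b c y) \<partial>lborel)
    = ennreal (gamma_density (a + b) c z)"
proof (cases "0 < z")
  case False
  then have zero: "ennreal (gamma_density a c (z - y)) * ennreal (gamma_density b c y) = 0" for y
    by (auto simp: gamma_density_def)
  have "(\<integral>\<^sup>+y. ennreal (gamma_density a c (z - y)) * ennreal (gamma_density b c y) \<partial>lborel) = 0"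
    by (simp only: zero nn_integral_const mult_zero_left)
  with False show ?thesis
    by (simp add: gamma_density_def)
next
  case z: True
  define K where "K = c powr (a + b) * exp (- (c * z)) / (Gamma a * Gamma b)"
  have K: "0 \<le> K"
    using a b c by (simp add: K_def Gamma_real_pos less_imp_le)
  have "ennreal (gamma_density a c (z - y)) * ennreal (gamma_density b c y)
      = ennreal K * (ennreal ((z - y) powr (a - 1) * y powr (b - 1)) * indicator {0..z} y)" for y
  proof -
    consider "0 < y \<and> y < z" | "y = 0" | "y = z" | "y < 0 \<or> z < y" by linarith
    then show ?thesis
    proof cases
      case 1
      then have "gamma_density a c (z - y) * gamma_density b c y = K * ((z - y) powr (a - 1) * y powr (b - 1))"
        unfolding gamma_density_def K_def by (simp add: powr_add exp_add[symmetric] field_simps)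
      with 1 a b c K show ?thesis
        by (simp add: ennreal_mult''[symmetric] gamma_density_nonneg indicator_def)
    qed (auto simp: gamma_density_def indicator_def)
  qed
  then have "(\<integral>\<^sup>+y. ennreal (gamma_density a c (z - y)) * ennreal (gamma_density b c y) \<partial>lborel)
      = ennreal K * ennreal (z powr (a + b - 1) * Beta a b)"
    by (simp add: nn_integral_cmult nn_integral_Beta_scaled a b z)
  also have "\<dots> = ennreal (gamma_density (a + b) c z)"
  proof -
    have "Gamma a \<noteq> 0" "Gamma b \<noteq> 0" "Gamma (a + b) \<noteq> 0"
      using Gamma_real_pos[OF a] Gamma_real_pos[OF b] Gamma_real_pos[OF add_pos_pos[OF a b]] by simp_all
    then have "K * (z powr (a + b - 1) * Beta a b) = gamma_density (a + b) c z"
      using z unfolding K_def gamma_density_def Beta_def by (simp add: field_simps)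
    then show ?thesis
      using K z a b by (simp add: ennreal_mult''[symmetric] Beta_real_pos less_imp_le)
  qed
  finally show ?thesis .
qed

lemma (in prob_space) indep_var_square_sum_squares:
  fixes X :: "'i \<Rightarrow> 'a \<Rightarrow> real"
  assumes ind: "indep_vars (\<lambda>_. borel) X I" and "j \<in> I" "J \<subseteq> I" "j \<notin> J"
  shows "indep_var borel (\<lambda>\<omega>. (X j \<omega>)\<^sup>2) borel (\<lambda>\<omega>. \<Sum>l\<in>J. (X l \<omega>)\<^sup>2)"
proof -
  have "indep_var (PiM {j} (\<lambda>_. borel)) (\<lambda>\<omega>. restrict (\<lambda>l. X l \<omega>) {j})
      (PiM J (\<lambda>_. borel)) (\<lambda>\<omega>. restrict (\<lambda>l. X l \<omega>) J)"
    by (rule indep_var_restrict[OF ind]) (use assms in auto)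
  moreover have "(\<lambda>f. (f j)\<^sup>2) \<in> borel_measurable (PiM {j} (\<lambda>_. borel :: real measure))"
    by measurable
  moreover have "(\<lambda>f. \<Sum>l\<in>J. (f l)\<^sup>2) \<in> borel_measurable (PiM J (\<lambda>_. borel :: real measure))"
    by measurable
  ultimately have "indep_var borel ((\<lambda>f. (f j)\<^sup>2) \<circ> (\<lambda>\<omega>. restrict (\<lambda>l. X l \<omega>) {j}))
      borel ((\<lambda>f. \<Sum>l\<in>J. (f l)\<^sup>2) \<circ> (\<lambda>\<omega>. restrict (\<lambda>l. X l \<omega>) J))"
    by (rule indep_var_compose)
  then show ?thesis
    by (simp add: comp_def cong: sum.cong)
qed

lemma (in prob_space) distributed_sum_squares_normal:
  fixes X :: "'i \<Rightarrow> 'a \<Rightarrow> real"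
  assumes s: "0 < \<sigma>" and ind: "indep_vars (\<lambda>_. borel) X I"
    and normal: "\<And>j. j \<in> I \<Longrightarrow> distributed M lborel (X j) (\<lambda>x. ennreal (normal_density 0 \<sigma> x))"
    and J: "finite J" "J \<noteq> {}" "J \<subseteq> I"
  shows "distributed M lborel (\<lambda>\<omega>. \<Sum>j\<in>J. (X j \<omega>)\<^sup>2)
    (\<lambda>y. ennreal (gamma_density (real (card J) / 2) (1 / (2 * \<sigma>\<^sup>2)) y))"
  using J
proof (induction J rule: finite_ne_induct)
  case (singleton j)
  then show ?case
    using distributed_square_normal[OF s normal[of j]] by simp
next
  case (insert j J)
  have "distributed M lborel (\<lambda>\<omega>. (X j \<omega>)\<^sup>2 + (\<Sum>l\<in>J. (X l \<omega>)\<^sup>2))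
      (\<lambda>y. \<integral>\<^sup>+z. ennreal (gamma_density (1/2) (1 / (2 * \<sigma>\<^sup>2)) (y - z))
        * ennreal (gamma_density (real (card J) / 2) (1 / (2 * \<sigma>\<^sup>2)) z) \<partial>lborel)"
    using insert by (intro distributed_convolution indep_var_square_sum_squares[OF ind]
        distributed_square_normal[OF s normal]) auto
  moreover have "1/2 + real (card J) / 2 = real (card (insert j J)) / 2"
    using insert by (simp add: field_simps)
  ultimately show ?case
    using insert s by (simp add: convolution_gamma_density card_gt_0_iff)
qed

section \<open>Ratios of Gamma variables\<close>

definition beta_prime_density :: "real \<Rightarrow> real \<Rightarrow> real \<Rightarrow> real" where
  "beta_prime_density a b s = (if 0 < s then s powr (a - 1) * (1 + s) powr (- (a + b)) / Beta a b else 0)"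

lemma borel_measurable_beta_prime_density[measurable]: "beta_prime_density a b \<in> borel_measurable borel"
  unfolding beta_prime_density_def by measurable

lemma nn_integral_gamma_quotient_density:
  fixes a b c s :: real
  assumes a: "0 < a" and b: "0 < b" and c: "0 < c"
  shows "(\<integral>\<^sup>+v. ennreal (v * gamma_density a c (v * s) * gamma_density b c v) \<partial>lborel)
    = ennreal (beta_prime_density a b s)"
proof (cases "0 < s")
  case False
  then have zero: "ennreal (v * gamma_density a c (v * s) * gamma_density b c v) = 0" for v
    by (cases "0 < v") (auto simp: gamma_density_def zero_less_mult_iff)
  have "(\<integral>\<^sup>+v. ennreal (v * gamma_density a c (v * s) * gamma_density b c v) \<partial>lborel) = 0"
    by (simp only: zero nn_integral_const mult_zero_left)
  with False show ?thesis
    by (simp add: beta_prime_density_def)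
next
  case s: True
  have Gamma_pos: "0 < Gamma a" "0 < Gamma b" "0 < Gamma (a + b)"
    using Gamma_real_pos[OF a] Gamma_real_pos[OF b] Gamma_real_pos[OF add_pos_pos[OF a b]] by simp_all
  define K where "K = c powr (a + b) * s powr (a - 1) / (Gamma a * Gamma b)"
  have K: "0 \<le> K"
    using Gamma_pos c by (simp add: K_def)
  \<comment> \<open>as a function of v, the integrand is an unnormalised Gamma(a + b, c (1 + s)) density\<close>
  have "ennreal (v * gamma_density a c (v * s) * gamma_density b c v)
      = ennreal K * (ennreal (v powr (a + b - 1) * exp (- ((c * (1 + s)) * v))) * indicator {0..} v)" for v
  proof (cases "0 < v")
    case v: True
    have "v powr (a + b - 1) = v * (v powr (a - 1) * v powr (b - 1))"
      using v by (simp add: powr_mult_base powr_add[symmetric])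
    moreover have "(v * s) powr (a - 1) = v powr (a - 1) * s powr (a - 1)"
      using v s by (simp add: powr_mult)
    moreover have "exp (- (c * (v * s))) * exp (- (c * v)) = exp (- ((c * (1 + s)) * v))"
      by (simp add: exp_add[symmetric] algebra_simps)
    ultimately have "v * gamma_density a c (v * s) * gamma_density b c v
        = K * (v powr (a + b - 1) * exp (- ((c * (1 + s)) * v)))"
      using v s unfolding gamma_density_def K_def by (simp add: powr_add field_simps)
    with v K show ?thesis
      by (simp add: ennreal_mult''[symmetric])
  qed (auto simp: gamma_density_def indicator_def)
  then have "(\<integral>\<^sup>+v. ennreal (v * gamma_density a c (v * s) * gamma_density b c v) \<partial>lborel)
      = ennreal K * ennreal (Gamma (a + b) / (c * (1 + s)) powr (a + b))"
    using a b c s by (simp add: nn_integral_cmult nn_integral_powr_times_exp_Ici)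
  also have "\<dots> = ennreal (beta_prime_density a b s)"
  proof -
    have "(c * (1 + s)) powr (a + b) = c powr (a + b) * (1 + s) powr (a + b)"
      using c s by (simp add: powr_mult)
    then have "K * (Gamma (a + b) / (c * (1 + s)) powr (a + b)) = beta_prime_density a b s"
      using s c Gamma_pos unfolding K_def beta_prime_density_def Beta_def powr_minus_divide
      by (simp add: field_simps)
    with K show ?thesis
      by (metis ennreal_mult' times_divide_eq_right)
  qed
  finally show ?thesis .
qed

lemma beta_prime_density_odds:
  fixes a b r :: real
  assumes r: "0 < r" "r < 1"
  shows "beta_prime_density a b (r / (1 - r)) * (1 / (1 - r)\<^sup>2) = beta_density a b r"
proof -
  have q: "0 < 1 - r" using r by simp
  have odds: "1 + r / (1 - r) = 1 / (1 - r)"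
    using q by (simp add: field_simps)
  have "(1 + r / (1 - r)) powr (- (a + b)) = (1 - r) powr (a + b)"
    unfolding powr_minus_divide odds using q by (simp add: powr_divide)
  also have "\<dots> = (1 - r) powr ((a - 1) + (b - 1) + 2)"
    by simp
  also have "\<dots> = (1 - r) powr (a - 1) * (1 - r) powr (b - 1) * (1 - r)\<^sup>2"
    using q by (simp only: powr_add powr_numeral)
  finally have num: "(1 + r / (1 - r)) powr (- (a + b)) = (1 - r) powr (a - 1) * (1 - r) powr (b - 1) * (1 - r)\<^sup>2" .
  have "beta_prime_density a b (r / (1 - r)) * (1 / (1 - r)\<^sup>2)
      = r powr (a - 1) / (1 - r) powr (a - 1) * ((1 - r) powr (a - 1) * (1 - r) powr (b - 1) * (1 - r)\<^sup>2)
        / Beta a b * (1 / (1 - r)\<^sup>2)"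
    using r q unfolding beta_prime_density_def num powr_divide
    by simp
  also have "\<dots> = r powr (a - 1) * (1 - r) powr (b - 1) / Beta a b"
    using q by (simp add: field_simps)
  also have "\<dots> = beta_density a b r"
    using r by (simp add: beta_density_def)
  finally show ?thesis .
qed

lemma nn_integral_beta_prime_odds:
  assumes [measurable]: "A \<in> sets borel"
  shows "(\<integral>\<^sup>+s. ennreal (beta_prime_density a b s) * indicator A (s / (s + 1)) * indicator {0..} s \<partial>lborel)
    = (\<integral>\<^sup>+r. ennreal (beta_density a b r) * indicator A r \<partial>lborel)"
proof -
  have "(\<integral>\<^sup>+s. ennreal (beta_prime_density a b s) * indicator A (s / (s + 1)) * indicator {0..} s \<partial>lborel)
      = (\<integral>\<^sup>+r. ennreal (beta_prime_density a b (r / (1 - r))) * indicator A (r / (1 - r) / (r / (1 - r) + 1))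
      * ennreal (1 / (1 - r)\<^sup>2) * indicator {0..<1} r \<partial>lborel)"
    by (rule nn_integral_odds_substitution) measurable
  also have "\<dots> = (\<integral>\<^sup>+r. ennreal (beta_density a b r) * indicator A r \<partial>lborel)"
  proof (intro nn_integral_cong)
    fix r :: real
    show "ennreal (beta_prime_density a b (r / (1 - r))) * indicator A (r / (1 - r) / (r / (1 - r) + 1))
        * ennreal (1 / (1 - r)\<^sup>2) * indicator {0..<1} r = ennreal (beta_density a b r) * indicator A r"
    proof (cases "0 < r \<and> r < 1")
      case True
      have "r / (1 - r) / (r / (1 - r) + 1) = r"
        using True by (simp add: field_simps)
      moreover have "ennreal (beta_prime_density a b (r / (1 - r))) * ennreal (1 / (1 - r)\<^sup>2) = ennreal (beta_density a b r)"
        using True beta_prime_density_odds[of r a b] by (simp add: ennreal_mult''[symmetric])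
      ultimately show ?thesis
        using True by (simp add: mult_ac)
    next
      case False
      then show ?thesis
        by (auto simp: beta_prime_density_def beta_density_def indicator_def)
    qed
  qed
  finally show ?thesis .
qed

lemma nn_integral_gamma_ratio:
  fixes a b c :: real
  assumes a: "0 < a" and b: "0 < b" and c: "0 < c" and [measurable]: "A \<in> sets borel"
  shows "(\<integral>\<^sup>+v. \<integral>\<^sup>+u. ennreal (gamma_density a c u) * ennreal (gamma_density b c v)
      * indicator A (u / (u + v)) \<partial>lborel \<partial>lborel)
    = (\<integral>\<^sup>+r. ennreal (beta_density a b r) * indicator A r \<partial>lborel)"
proof -
  have inner: "(\<integral>\<^sup>+u. ennreal (gamma_density a c u) * ennreal (gamma_density b c v) * indicator A (u / (u + v)) \<partial>lborel)
      = (\<integral>\<^sup>+s. ennreal (v * gamma_density a c (v * s) * gamma_density b c v) * indicator A (s / (s + 1)) \<partial>lborel)" for v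
  proof (cases "0 < v")
    case False
    then show ?thesis by (simp add: gamma_density_def)
  next
    case v: True
    have "(\<integral>\<^sup>+u. ennreal (gamma_density a c u) * ennreal (gamma_density b c v) * indicator A (u / (u + v)) \<partial>lborel)
      = (\<integral>\<^sup>+s. ennreal v * (ennreal (gamma_density a c (v * s)) * ennreal (gamma_density b c v)
        * indicator A (s / (s + 1))) \<partial>lborel)"
      by (rule nn_integral_ratio_rescale[OF _ _ v]) measurable
    also have "\<dots> = (\<integral>\<^sup>+s. ennreal (v * gamma_density a c (v * s) * gamma_density b c v) * indicator A (s / (s + 1)) \<partial>lborel)"
      using v a b c by (intro nn_integral_cong) (simp add: ennreal_mult'' gamma_density_nonneg mult.assoc)
    finally show ?thesis .
  qed
  have "(\<integral>\<^sup>+v. \<integral>\<^sup>+u. ennreal (gamma_density a c u) * ennreal (gamma_density b c v)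
      * indicator A (u / (u + v)) \<partial>lborel \<partial>lborel)
    = (\<integral>\<^sup>+s. \<integral>\<^sup>+v. ennreal (v * gamma_density a c (v * s) * gamma_density b c v) * indicator A (s / (s + 1)) \<partial>lborel \<partial>lborel)"
    unfolding inner by (rule lborel_pair.Fubini') measurable
  also have "\<dots> = (\<integral>\<^sup>+s. ennreal (beta_prime_density a b s) * indicator A (s / (s + 1)) * indicator {0..} s \<partial>lborel)"
    by (intro nn_integral_cong)
      (simp add: nn_integral_multc nn_integral_gamma_quotient_density[OF a b c] beta_prime_density_def indicator_def)
  also have "\<dots> = (\<integral>\<^sup>+r. ennreal (beta_density a b r) * indicator A r \<partial>lborel)"
    by (rule nn_integral_beta_prime_odds) fact
  finally show ?thesis .
qed

lemma (in prob_space) distributed_gamma_ratio_beta: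
  fixes U V :: "'a \<Rightarrow> real"
  assumes a: "0 < a" and b: "0 < b" and c: "0 < c"
    and ind: "indep_var borel U borel V"
    and U: "distributed M lborel U (\<lambda>x. ennreal (gamma_density a c x))"
    and V: "distributed M lborel V (\<lambda>x. ennreal (gamma_density b c x))"
  shows "distributed M lborel (\<lambda>\<omega>. U \<omega> / (U \<omega> + V \<omega>)) (\<lambda>x. ennreal (beta_density a b x))"
proof (rule distributed_lborelI)
  have [measurable]: "U \<in> borel_measurable M" "V \<in> borel_measurable M"
    using distributed_measurable[OF U] distributed_measurable[OF V] by simp_all
  show "(\<lambda>\<omega>. U \<omega> / (U \<omega> + V \<omega>)) \<in> borel_measurable M"
    by measurable
  have joint: "distributed M (lborel \<Otimes>\<^sub>M lborel) (\<lambda>x. (U x, V x))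
      (\<lambda>(x, y). ennreal (gamma_density a c x) * ennreal (gamma_density b c y))"
  proof (rule distributed_joint_indep[OF _ _ U V])
    have "indep_var lborel (id \<circ> U) lborel (id \<circ> V)"
      by (rule indep_var_compose[OF ind]) auto
    then show "indep_var lborel U lborel V"
      by simp
  qed (auto intro: lborel.sigma_finite_measure_axioms)
  fix A :: "real set" assume [measurable]: "A \<in> sets borel"
  define Q where "Q = {p \<in> space (lborel \<Otimes>\<^sub>M lborel). fst p / (fst p + snd p) \<in> A}"
  have [measurable]: "Q \<in> sets (lborel \<Otimes>\<^sub>M lborel)"
    unfolding Q_def by measurable
  have "emeasure M ((\<lambda>\<omega>. U \<omega> / (U \<omega> + V \<omega>)) -` A \<inter> space M) = emeasure M ((\<lambda>x. (U x, V x)) -` Q \<inter> space M)"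
    by (auto simp: Q_def space_pair_measure intro!: arg_cong[where f = "emeasure M"])
  also have "\<dots> = (\<integral>\<^sup>+p. (\<lambda>(x, y). ennreal (gamma_density a c x) * ennreal (gamma_density b c y)) p
      * indicator Q p \<partial>(lborel \<Otimes>\<^sub>M lborel))"
    by (rule distributed_emeasure[OF joint]) measurable
  also have "\<dots> = (\<integral>\<^sup>+p. ennreal (gamma_density a c (fst p)) * ennreal (gamma_density b c (snd p))
      * indicator A (fst p / (fst p + snd p)) \<partial>(lborel \<Otimes>\<^sub>M lborel))"
    by (intro nn_integral_cong) (auto simp: Q_def space_pair_measure indicator_def split: prod.splits)
  also have "\<dots> = (\<integral>\<^sup>+v. \<integral>\<^sup>+u. ennreal (gamma_density a c u) * ennreal (gamma_density b c v)
      * indicator A (u / (u + v)) \<partial>lborel \<partial>lborel)"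
    by (rule lborel_pair.nn_integral_snd[symmetric, where f = "\<lambda>p. ennreal (gamma_density a c (fst p))
        * ennreal (gamma_density b c (snd p)) * indicator A (fst p / (fst p + snd p))", simplified])
      measurable
  also have "\<dots> = (\<integral>\<^sup>+r. ennreal (beta_density a b r) * indicator A r \<partial>lborel)"
    by (rule nn_integral_gamma_ratio[OF a b c]) measurable
  finally show "emeasure M ((\<lambda>\<omega>. U \<omega> / (U \<omega> + V \<omega>)) -` A \<inter> space M)
      = (\<integral>\<^sup>+r. ennreal (beta_density a b r) * indicator A r \<partial>lborel)" .
qed simp

lemma integral_beta_density_mean:
  fixes a b :: real
  assumes a: "0 < a" and b: "0 < b"
  shows "(\<integral>x. beta_density a b x * x \<partial>lborel) = a / (a + b)"
proof -
  have B: "0 < Beta a b"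
    using a b by (rule Beta_real_pos)
  have "ennreal (beta_density a b x * x)
      = ennreal (1 / Beta a b) * (ennreal (x powr a * (1 - x) powr (b - 1)) * indicator {0..1} x)" for x
  proof (cases "0 < x \<and> x < 1")
    case True
    then have "x powr a = x powr (a - 1) * x"
      by (simp add: powr_mult_base mult.commute)
    with True B show ?thesis
      by (simp add: beta_density_def ennreal_mult''[symmetric] field_simps)
  qed (auto simp: beta_density_def indicator_def)
  then have "(\<integral>\<^sup>+x. ennreal (beta_density a b x * x) \<partial>lborel) = ennreal (Beta (a + 1) b / Beta a b)"
    using a b B nn_integral_Beta_real[of "a + 1" b] by (simp add: nn_integral_cmult ennreal_mult'[symmetric])
  then have "(\<integral>x. beta_density a b x * x \<partial>lborel) = Beta (a + 1) b / Beta a b"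
    using B Beta_real_pos[of "a + 1" b] a b
    by (subst integral_eq_nn_integral) (auto simp: beta_density_def)
  also have "\<dots> = a / (a + b)"
  proof -
    have "(a + b) * Beta (a + 1) b = a * Beta a b"
      using a by (intro Beta_plus1_left) (auto dest: nonpos_Ints_nonpos)
    with a b B show ?thesis
      by (simp add: field_simps)
  qed
  finally show ?thesis .
qed

lemma (in prob_space) beta_distributed_expectation:
  assumes "0 < a" "0 < b" and X: "distributed M lborel X (\<lambda>x. ennreal (beta_density a b x))"
  shows "expectation X = a / (a + b)"
  using distributed_integral[OF X, of "\<lambda>x. x"] integral_beta_density_mean[OF assms(1,2)]
  by (simp add: beta_density_nonneg assms(1,2))

lemma (in prob_space) distributed_normal_square_ratio_beta:
  fixes X :: "'i \<Rightarrow> 'a \<Rightarrow> real"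
  assumes s: "0 < \<sigma>" and ind: "indep_vars (\<lambda>_. borel) X I"
    and normal: "\<And>j. j \<in> I \<Longrightarrow> distributed M lborel (X j) (\<lambda>x. ennreal (normal_density 0 \<sigma> x))"
    and J: "finite J" "J \<subseteq> I" "j \<in> J" "2 \<le> card J"
  shows "distributed M lborel (\<lambda>\<omega>. (X j \<omega>)\<^sup>2 / (\<Sum>l\<in>J. (X l \<omega>)\<^sup>2))
    (\<lambda>x. ennreal (beta_density (1/2) ((real (card J) - 1) / 2) x))"
proof -
  have "J - {j} \<noteq> {}"
  proof
    assume "J - {j} = {}"
    then have "card J \<le> card {j}"
      by (intro card_mono) auto
    with J show False by simp
  qed
  with J have rest: "finite (J - {j})" "J - {j} \<noteq> {}" "J - {j} \<subseteq> I"
    by auto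
  have card_rest: "real (card (J - {j})) / 2 = (real (card J) - 1) / 2"
    using J by (simp add: of_nat_diff)
  have "distributed M lborel (\<lambda>\<omega>. (X j \<omega>)\<^sup>2 / ((X j \<omega>)\<^sup>2 + (\<Sum>l\<in>J - {j}. (X l \<omega>)\<^sup>2)))
      (\<lambda>x. ennreal (beta_density (1/2) (real (card (J - {j})) / 2) x))"
  proof (rule distributed_gamma_ratio_beta)
    show "indep_var borel (\<lambda>\<omega>. (X j \<omega>)\<^sup>2) borel (\<lambda>\<omega>. \<Sum>l\<in>J - {j}. (X l \<omega>)\<^sup>2)"
      using J by (intro indep_var_square_sum_squares[OF ind]) auto
    show "distributed M lborel (\<lambda>\<omega>. (X j \<omega>)\<^sup>2) (\<lambda>x. ennreal (gamma_density (1/2) (1 / (2 * \<sigma>\<^sup>2)) x))"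
      using J by (intro distributed_square_normal[OF s normal]) auto
    show "distributed M lborel (\<lambda>\<omega>. \<Sum>l\<in>J - {j}. (X l \<omega>)\<^sup>2)
        (\<lambda>x. ennreal (gamma_density (real (card (J - {j})) / 2) (1 / (2 * \<sigma>\<^sup>2)) x))"
      by (rule distributed_sum_squares_normal[OF s ind normal rest])
  qed (use s rest in \<open>auto simp: card_gt_0_iff\<close>)
  then show ?thesis
    using J by (simp add: sum.remove card_rest)
qed

section \<open>Column normalisation\<close>

lemma power2_div_sum_power2_le_1:
  fixes x :: "'i \<Rightarrow> real"
  assumes "finite K" "k \<in> K"
  shows "(x k)\<^sup>2 / (\<Sum>m\<in>K. (x m)\<^sup>2) \<le> 1"
proof -
  have "(x k)\<^sup>2 \<le> (\<Sum>m\<in>K. (x m)\<^sup>2)"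
    using assms by (intro member_le_sum) auto
  then show ?thesis
    by (cases "(\<Sum>m\<in>K. (x m)\<^sup>2) = 0") (auto simp: divide_le_eq_1 sum_nonneg order.strict_iff_order)
qed

lemma normalized_entry_square_le:
  fixes w :: "'r \<Rightarrow> 'c \<Rightarrow> real"
  assumes "finite R" "finite C" "k \<in> R" "i \<in> C"
  shows "(w k i / sqrt (\<Sum>l\<in>C. \<bar>\<Sum>m\<in>R. w m i * w m l\<bar>))\<^sup>2 \<le> (w k i)\<^sup>2 / (\<Sum>m\<in>R. (w m i)\<^sup>2)"
proof -
  define S where "S = (\<Sum>m\<in>R. (w m i)\<^sup>2)"
  define T where "T = (\<Sum>l\<in>C. \<bar>\<Sum>m\<in>R. w m i * w m l\<bar>)"
  have "S = \<bar>\<Sum>m\<in>R. w m i * w m i\<bar>"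
    unfolding S_def by (simp add: power2_eq_square sum_nonneg)
  also have "\<dots> \<le> T"
    unfolding T_def using assms by (intro member_le_sum[where f = "\<lambda>l. \<bar>\<Sum>m\<in>R. w m i * w m l\<bar>"]) auto
  finally have "S \<le> T" .
  moreover have "(w k i)\<^sup>2 \<le> S"
    unfolding S_def using assms by (intro member_le_sum) auto
  moreover have "0 \<le> S"
    unfolding S_def by (intro sum_nonneg) auto
  ultimately have "(w k i)\<^sup>2 / T \<le> (w k i)\<^sup>2 / S"
    by (cases "S = 0") (auto intro!: divide_left_mono mult_pos_pos)
  moreover have "0 \<le> T"
    unfolding T_def by (intro sum_nonneg) auto
  ultimately show ?thesis
    by (simp add: S_def T_def power_divide)
qed

lemma (in prob_space) integral_normalized_entry_square_le:
  fixes w :: "'r \<Rightarrow> 'c \<Rightarrow> 'a \<Rightarrow> real"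
  assumes "finite R" "finite C" "k \<in> R" "i \<in> C"
    and [measurable]: "\<And>m. m \<in> R \<Longrightarrow> w m i \<in> borel_measurable M"
  shows "(\<integral>\<omega>. (w k i \<omega> / sqrt (\<Sum>l\<in>C. \<bar>\<Sum>m\<in>R. w m i \<omega> * w m l \<omega>\<bar>))\<^sup>2 \<partial>M)
    \<le> (\<integral>\<omega>. (w k i \<omega>)\<^sup>2 / (\<Sum>m\<in>R. (w m i \<omega>)\<^sup>2) \<partial>M)"
proof (rule integral_mono')
  show "integrable M (\<lambda>\<omega>. (w k i \<omega>)\<^sup>2 / (\<Sum>m\<in>R. (w m i \<omega>)\<^sup>2))"
  proof (rule integrable_const_bound[where B = 1])
    show "AE \<omega> in M. norm ((w k i \<omega>)\<^sup>2 / (\<Sum>m\<in>R. (w m i \<omega>)\<^sup>2)) \<le> 1"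
      using assms(1,3) power2_div_sum_power2_le_1[of R k "\<lambda>m. w m i _"]
      by (intro AE_I2) (simp add: sum_nonneg)
    show "(\<lambda>\<omega>. (w k i \<omega>)\<^sup>2 / (\<Sum>m\<in>R. (w m i \<omega>)\<^sup>2)) \<in> borel_measurable M"
      using assms(3) by measurable
  qed
  show "(w k i \<omega> / sqrt (\<Sum>l\<in>C. \<bar>\<Sum>m\<in>R. w m i \<omega> * w m l \<omega>\<bar>))\<^sup>2 \<le> (w k i \<omega>)\<^sup>2 / (\<Sum>m\<in>R. (w m i \<omega>)\<^sup>2)" for \<omega>
    using normalized_entry_square_le[OF assms(1-4), of "\<lambda>m l. w m l \<omega>"] by simp
  show "0 \<le> (w k i \<omega>)\<^sup>2 / (\<Sum>m\<in>R. (w m i \<omega>)\<^sup>2)" for \<omega>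
    by (intro divide_nonneg_nonneg sum_nonneg) auto
qed

lemma (in prob_space) distributed_column_square_ratio_beta:
  fixes w :: "nat \<Rightarrow> nat \<Rightarrow> 'a \<Rightarrow> real"
  assumes "0 < \<sigma>" "2 \<le> d" "k < d" "i < n"
    and normal: "\<And>k i. k < d \<Longrightarrow> i < n \<Longrightarrow> distributed M lborel (w k i) (\<lambda>x. ennreal (normal_density 0 \<sigma> x))"
    and ind: "indep_vars (\<lambda>_. borel) (\<lambda>p. w (fst p) (snd p)) ({..<d} \<times> {..<n})"
  shows "distributed M lborel (\<lambda>\<omega>. (w k i \<omega>)\<^sup>2 / (\<Sum>m<d. (w m i \<omega>)\<^sup>2))
    (\<lambda>x. ennreal (beta_density (1/2) ((real d - 1) / 2) x))"
proof -
  define J where "J = (\<lambda>m. (m, i)) ` {..<d}"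
  have inj: "inj_on (\<lambda>m. (m, i)) {..<d}"
    by (auto simp: inj_on_def)
  have card_J: "card J = d"
    by (simp add: J_def card_image[OF inj])
  have J: "finite J" "J \<subseteq> {..<d} \<times> {..<n}" "(k, i) \<in> J" "2 \<le> card J"
    using assms(2-4) card_J by (auto simp: J_def)
  have "(\<Sum>p\<in>J. (w (fst p) (snd p) \<omega>)\<^sup>2) = (\<Sum>m<d. (w m i \<omega>)\<^sup>2)" for \<omega>
    by (simp add: J_def sum.reindex[OF inj])
  then show ?thesis
    using distributed_normal_square_ratio_beta[OF assms(1) ind _ J] normal
    by (simp add: card_J mem_Times_iff)
qed

theorem mainTheorem1:
  fixes M :: "'a measure" and w :: "nat \<Rightarrow> nat \<Rightarrow> 'a \<Rightarrow> real"
    and d n :: nat and \<sigma> :: real and k i :: nat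
  assumes "prob_space M"
    and "d \<ge> 2" and "n \<ge> 1" and "\<sigma> > 0"
    and "\<And>k i. k < d \<Longrightarrow> i < n \<Longrightarrow>
           distributed M lborel (w k i) (\<lambda>x. ennreal (normal_density 0 \<sigma> x))"
    and "prob_space.indep_vars M (\<lambda>_. borel) (\<lambda>p. w (fst p) (snd p)) ({..<d} \<times> {..<n})"
    and "k < d" and "i < n"
  shows "distributed M lborel
           (\<lambda>\<omega>. (w k i \<omega>)\<^sup>2 / (\<Sum>m<d. (w m i \<omega>)\<^sup>2))
           (\<lambda>x. ennreal (beta_density (1/2) ((real d - 1) / 2) x))
       \<and> (\<integral>\<omega>. (w k i \<omega>)\<^sup>2 / (\<Sum>m<d. (w m i \<omega>)\<^sup>2) \<partial>M) = 1 / real d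
       \<and> (let T = (\<lambda>j \<omega>. \<Sum>l<n. \<bar>\<Sum>m<d. w m j \<omega> * w m l \<omega>\<bar>);
              Wbar = (\<lambda>m j \<omega>. w m j \<omega> / sqrt (T j \<omega>))
          in (\<integral>\<omega>. (Wbar k i \<omega>)\<^sup>2 \<partial>M) \<le> 1 / real d)"
proof -
  interpret prob_space M by fact
  have ratio: "distributed M lborel (\<lambda>\<omega>. (w k i \<omega>)\<^sup>2 / (\<Sum>m<d. (w m i \<omega>)\<^sup>2))
      (\<lambda>x. ennreal (beta_density (1/2) ((real d - 1) / 2) x))"
    using assms(4,2,7,8,5,6) by (rule distributed_column_square_ratio_beta)
  moreover have "(\<integral>\<omega>. (w k i \<omega>)\<^sup>2 / (\<Sum>m<d. (w m i \<omega>)\<^sup>2) \<partial>M) = 1 / real d"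
    using beta_distributed_expectation[OF _ _ ratio] assms(2) by (simp add: field_simps)
  moreover have "(\<integral>\<omega>. (w k i \<omega> / sqrt (\<Sum>l<n. \<bar>\<Sum>m<d. w m i \<omega> * w m l \<omega>\<bar>))\<^sup>2 \<partial>M)
      \<le> (\<integral>\<omega>. (w k i \<omega>)\<^sup>2 / (\<Sum>m<d. (w m i \<omega>)\<^sup>2) \<partial>M)"
  proof (rule integral_normalized_entry_square_le)
    show "w m i \<in> borel_measurable M" if "m \<in> {..<d}" for m
      using distributed_measurable[OF assms(5)] that assms(8) by simp
  qed (use assms(7,8) in auto)
  ultimately show ?thesis
    by simp
qed

end
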